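(* Let $s\in(0,1)$, let $E\subset\mathbb{R}^n$ be a set of locally finite $s$-perimeter and let $\Omega\subset\mathbb{R}^n$ be an open set. Then \[ \partial^-E\cap\Omega\neq\emptyset\ \Longrightarrow\ P_s^L(E,\Omega)>0. \] Moreover, if $\Omega$ is connected, \[ \partial^-E\cap\Omega=\emptyset\ \Longrightarrow\ P_s^L(E,\Omega)=0. \] Consequently, for every bounded connected open set $\Omega$, \[ P_s^L(E,\Omega)>0\ \Longleftrightarrow\ \partial^-E\cap\Omega\neq\emptyset. \]
   Context: $\mathcal L_s(A,B):=\int_A\int_B|x-y|^{-n-s}dx\,dy$; $P_s^L(E,\Omega):=\mathcal L_s(E\cap\Omega,E^c\cap\Omega)$; $P_s(E,\Omega):=P_s^L(E,\Omega)+\mathcal L_s(E\cap\Omega,E^c\setminus\Omega)+\mathcal L_s(E\setminus\Omega,E^c\cap\Omega)$. $E$ has locally finite $s$-perimeter if $P_s(E,\Omega)<\infty$ for every bounded open $\Omega$. $\partial^-E:=\{x: 0<|E\cap B_r(x)|<\omega_nr^n\ \forall r>0\}$, $\omega_n=|B_1|$. *)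

theory Defs
  imports "HOL-Analysis.Analysis"
begin

definition Ls :: "real \<Rightarrow> 'a::euclidean_space set \<Rightarrow> 'a set \<Rightarrow> ennreal" where
  "Ls s A B = (\<integral>\<^sup>+ x. (\<integral>\<^sup>+ y. indicator A x * indicator B y *
       ennreal (norm (x - y) powr (- (real DIM('a) + s))) \<partial>lebesgue) \<partial>lebesgue)"

definition PsL :: "real \<Rightarrow> 'a::euclidean_space set \<Rightarrow> 'a set \<Rightarrow> ennreal" where
  "PsL s E \<Omega> = Ls s (E \<inter> \<Omega>) (- E \<inter> \<Omega>)"

definition Ps :: "real \<Rightarrow> 'a::euclidean_space set \<Rightarrow> 'a set \<Rightarrow> ennreal" where
  "Ps s E \<Omega> = PsL s E \<Omega> + Ls s (E \<inter> \<Omega>) (- E - \<Omega>) + Ls s (E - \<Omega>) (- E \<inter> \<Omega>)"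

definition locally_finite_sper :: "real \<Rightarrow> 'a::euclidean_space set \<Rightarrow> bool" where
  "locally_finite_sper s E \<longleftrightarrow> (\<forall>\<Omega>. open \<Omega> \<and> bounded \<Omega> \<longrightarrow> Ps s E \<Omega> < \<infinity>)"

definition meas_boundary :: "'a::euclidean_space set \<Rightarrow> 'a set" where
  "meas_boundary E = {x. \<forall>r>0. 0 < emeasure lebesgue (E \<inter> ball x r) \<and>
                               emeasure lebesgue (E \<inter> ball x r) < emeasure lebesgue (ball x r)}"

end

theory Submission
  imports Defs
begin

text \<open>
  If x lies in the measure-theoretic boundary of E and \<open>B \<subseteq> \<Omega>\<close> is a ball around x, both
  \<open>E \<inter> B\<close> and \<open>B - E\<close> have positive measure, and on \<open>B \<times> B\<close> the kernel is bounded below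
  by \<open>(2r) powr -(n+s)\<close>, so the interaction is positive. Conversely, the points near which E is
  null and those near which its complement is null form two disjoint open sets; if \<open>\<Omega>\<close>
  avoids the boundary they cover \<open>\<Omega>\<close>, so by connectedness \<open>\<Omega>\<close> lies in one of them, and a
  Lindelof argument makes \<open>E \<inter> \<Omega>\<close> or \<open>\<Omega> - E\<close> null.
\<close>


lemma null_sets_lebesgue_subset:
  "B \<in> null_sets lebesgue \<Longrightarrow> A \<subseteq> B \<Longrightarrow> A \<in> null_sets lebesgue"
  by (meson negligible_iff_null_sets negligible_subset)

lemma ball_notin_null_sets:
  fixes x :: "'a::euclidean_space"
  assumes "r > 0"
  shows "ball x r \<notin> null_sets lebesgue"
  using assms open_not_negligible[of "ball x r"] by (simp add: negligible_iff_null_sets)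

lemma emeasure_Int_less_iff:
  assumes "E \<in> sets M" "B \<in> sets M" "emeasure M B \<noteq> \<infinity>"
  shows "emeasure M (E \<inter> B) < emeasure M B \<longleftrightarrow> 0 < emeasure M (B - E)"
proof -
  have "emeasure M B = emeasure M (E \<inter> B) + emeasure M (B - E)"
    using assms by (subst plus_emeasure) (auto intro!: arg_cong[where f="emeasure M"])
  moreover have "emeasure M (E \<inter> B) \<noteq> \<infinity>"
    using assms emeasure_mono[of "E \<inter> B" B M] by (auto simp: top_unique)
  ultimately show ?thesis
    by (metis add.right_neutral ennreal_add_left_cancel_less not_gr_zero)
qed

lemma mem_meas_boundary_iff:
  fixes E :: "'a::euclidean_space set"
  assumes "E \<in> sets lebesgue"
  shows "x \<in> meas_boundary E \<longleftrightarrow>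
    (\<forall>r>0. E \<inter> ball x r \<notin> null_sets lebesgue \<and> - E \<inter> ball x r \<notin> null_sets lebesgue)"
proof -
  have "emeasure lebesgue (E \<inter> ball x r) < emeasure lebesgue (ball x r) \<longleftrightarrow>
        - E \<inter> ball x r \<notin> null_sets lebesgue" for r
  proof -
    have "ball x r - E = - E \<inter> ball x r" by blast
    moreover have "ball x r - E \<in> sets lebesgue" using assms by auto
    ultimately show ?thesis
      using emeasure_Int_less_iff[OF assms, of "ball x r"] lmeasurable_ball[of x r]
      by (auto simp: fmeasurable_def null_sets_def zero_less_iff_neq_zero)
  qed
  moreover have "0 < emeasure lebesgue (E \<inter> ball x r) \<longleftrightarrow> E \<inter> ball x r \<notin> null_sets lebesgue" for r
    using assms sets.Int[OF assms, of "ball x r"] by (auto simp: null_sets_def zero_less_iff_neq_zero)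
  ultimately show ?thesis unfolding meas_boundary_def by auto
qed

lemma Ls_mono:
  assumes "A \<subseteq> A'" "B \<subseteq> B'"
  shows "Ls s A B \<le> Ls s A' B'"
  unfolding Ls_def
  by (intro nn_integral_mono mult_right_mono mult_mono) (use assms in \<open>auto simp: indicator_def\<close>)

lemma Ls_null_left:
  fixes A :: "'a::euclidean_space set"
  assumes "A \<in> null_sets lebesgue"
  shows "Ls s A B = 0"
proof -
  have "Ls s A B = (\<integral>\<^sup>+ x. 0 \<partial>(lebesgue :: 'a measure))"
    unfolding Ls_def
    by (rule nn_integral_cong_AE, rule eventually_mono[OF AE_not_in[OF assms]]) (auto split: split_indicator)
  then show ?thesis by simp
qed

lemma Ls_null_right:
  fixes B :: "'a::euclidean_space set"
  assumes "B \<in> null_sets lebesgue"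
  shows "Ls s A B = 0"
proof -
  have "(\<integral>\<^sup>+ y. indicator A x * indicator B y * ennreal (norm (x - y) powr (- (real DIM('a) + s)))
          \<partial>lebesgue) = 0" for x :: 'a
  proof -
    have "(\<integral>\<^sup>+ y. indicator A x * indicator B y * ennreal (norm (x - y) powr (- (real DIM('a) + s)))
          \<partial>lebesgue) = (\<integral>\<^sup>+ y. 0 \<partial>(lebesgue :: 'a measure))"
      by (rule nn_integral_cong_AE, rule eventually_mono[OF AE_not_in[OF assms]]) (auto split: split_indicator)
    then show ?thesis by simp
  qed
  then show ?thesis unfolding Ls_def by simp
qed

lemma Ls_ge_emeasure_mult:
  fixes A B :: "'a::euclidean_space set"
  assumes "- real DIM('a) \<le> s"
    and A: "A \<in> sets lebesgue" and B: "B \<in> sets lebesgue" and "A \<inter> B = {}"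
    and "A \<subseteq> ball x r" "B \<subseteq> ball x r"
  shows "ennreal ((2 * r) powr - (real DIM('a) + s)) * emeasure lebesgue A * emeasure lebesgue B
    \<le> Ls s A B"
proof -
  define c where "c = (2 * r) powr - (real DIM('a) + s)"
  have kernel: "c \<le> norm (u - y) powr - (real DIM('a) + s)" if "u \<in> A" "y \<in> B" for u y
  proof -
    have "u \<noteq> y" using that assms by auto
    have "dist x u < r" "dist x y < r" using that assms by auto
    moreover have "norm (u - y) \<le> dist x u + dist x y"
      by (metis dist_norm dist_triangle2 dist_commute)
    ultimately have "norm (u - y) \<le> 2 * r" by linarith
    then show ?thesis
      unfolding c_def using assms \<open>u \<noteq> y\<close> by (intro powr_mono2') auto
  qed
  have inner: "ennreal c * emeasure lebesgue B \<le>
      (\<integral>\<^sup>+ y. indicator A u * indicator B y * ennreal (norm (u - y) powr - (real DIM('a) + s))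
        \<partial>lebesgue)" if "u \<in> A" for u
  proof -
    have "ennreal c * emeasure lebesgue B = (\<integral>\<^sup>+ y. ennreal c * indicator B y \<partial>lebesgue)"
      using B by (simp add: nn_integral_cmult_indicator)
    also have "\<dots> \<le> (\<integral>\<^sup>+ y. indicator A u * indicator B y *
        ennreal (norm (u - y) powr - (real DIM('a) + s)) \<partial>lebesgue)"
      using that kernel by (intro nn_integral_mono) (auto intro: ennreal_leI split: split_indicator)
    finally show ?thesis .
  qed
  have "ennreal c * emeasure lebesgue A * emeasure lebesgue B
      = (\<integral>\<^sup>+ u. (ennreal c * emeasure lebesgue B) * indicator A u \<partial>lebesgue)"
    by (subst nn_integral_cmult_indicator[OF A]) (simp add: mult_ac)
  also have "\<dots> \<le> Ls s A B"
    unfolding Ls_def using inner by (intro nn_integral_mono) (auto split: split_indicator)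
  finally show ?thesis unfolding c_def .
qed

definition locally_null_points :: "'a::euclidean_space set \<Rightarrow> 'a set" where
  "locally_null_points F = \<Union>{ball x r | x r. F \<inter> ball x r \<in> null_sets lebesgue}"

lemma open_locally_null_points: "open (locally_null_points F)"
  unfolding locally_null_points_def by auto

lemma null_sets_Int_locally_null_points: "F \<inter> locally_null_points F \<in> null_sets lebesgue"
proof -
  define \<U> where "\<U> = {ball x r | x r. F \<inter> ball x r \<in> null_sets lebesgue}"
  obtain \<V> where \<V>: "\<V> \<subseteq> \<U>" "countable \<V>" "\<Union>\<V> = \<Union>\<U>"
    using Lindelof[of \<U>] unfolding \<U>_def by auto
  have "F \<inter> locally_null_points F = (\<Union>V\<in>\<V>. F \<inter> V)"
    unfolding locally_null_points_def \<U>_def[symmetric] \<V>(3)[symmetric] by blast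
  also have "\<dots> \<in> null_sets lebesgue"
    using \<V> unfolding \<U>_def by (intro null_sets_UN') auto
  finally show ?thesis .
qed

lemma locally_null_points_Compl_disjoint:
  "locally_null_points E \<inter> locally_null_points (- E) = {}"
proof (rule ccontr)
  assume "locally_null_points E \<inter> locally_null_points (- E) \<noteq> {}"
  then obtain z x1 r1 x2 r2 where z: "z \<in> ball x1 r1" "z \<in> ball x2 r2"
    and null: "E \<inter> ball x1 r1 \<in> null_sets lebesgue" "- E \<inter> ball x2 r2 \<in> null_sets lebesgue"
    unfolding locally_null_points_def by blast
  obtain \<rho> where \<rho>: "\<rho> > 0" "ball z \<rho> \<subseteq> ball x1 r1 \<inter> ball x2 r2"
    using z by (meson IntI open_Int open_ball openE)
  have "ball z \<rho> \<subseteq> (E \<inter> ball x1 r1) \<union> (- E \<inter> ball x2 r2)" using \<rho> by auto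
  then have "ball z \<rho> \<in> null_sets lebesgue"
    using null by (blast intro: null_sets_lebesgue_subset)
  then show False using ball_notin_null_sets[OF \<rho>(1)] by blast
qed

lemma Compl_meas_boundary_subset:
  fixes E :: "'a::euclidean_space set"
  assumes "E \<in> sets lebesgue"
  shows "- meas_boundary E \<subseteq> locally_null_points E \<union> locally_null_points (- E)"
proof
  fix x assume "x \<in> - meas_boundary E"
  then obtain r where "r > 0"
    and "E \<inter> ball x r \<in> null_sets lebesgue \<or> - E \<inter> ball x r \<in> null_sets lebesgue"
    using mem_meas_boundary_iff[OF assms] by auto
  then show "x \<in> locally_null_points E \<union> locally_null_points (- E)"
    unfolding locally_null_points_def by (auto intro!: exI[of _ "ball x r"])
qed

lemma PsL_pos_if_meas_boundary:
  fixes E \<Omega> :: "'a::euclidean_space set"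
  assumes "- real DIM('a) \<le> s" and E: "E \<in> sets lebesgue" and "open \<Omega>"
    and "meas_boundary E \<inter> \<Omega> \<noteq> {}"
  shows "PsL s E \<Omega> > 0"
proof -
  obtain x where x: "x \<in> meas_boundary E" "x \<in> \<Omega>" using assms by blast
  obtain r where r: "r > 0" "ball x r \<subseteq> \<Omega>" using \<open>open \<Omega>\<close> x(2) by (rule openE)
  have "- E \<inter> ball x r = ball x r - E" by blast
  then have meas: "E \<inter> ball x r \<in> sets lebesgue" "- E \<inter> ball x r \<in> sets lebesgue"
    using E by auto
  moreover have "E \<inter> ball x r \<notin> null_sets lebesgue" "- E \<inter> ball x r \<notin> null_sets lebesgue"
    using x(1) r(1) mem_meas_boundary_iff[OF E] by auto
  ultimately have "0 < emeasure lebesgue (E \<inter> ball x r)" "0 < emeasure lebesgue (- E \<inter> ball x r)"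
    by (auto simp: null_sets_def zero_less_iff_neq_zero)
  then have "0 < ennreal ((2 * r) powr - (real DIM('a) + s)) *
      emeasure lebesgue (E \<inter> ball x r) * emeasure lebesgue (- E \<inter> ball x r)"
    using r(1) by (simp add: ennreal_zero_less_mult_iff)
  also have "\<dots> \<le> Ls s (E \<inter> ball x r) (- E \<inter> ball x r)"
    using assms meas by (intro Ls_ge_emeasure_mult) auto
  also have "\<dots> \<le> PsL s E \<Omega>"
    unfolding PsL_def using r(2) by (intro Ls_mono) auto
  finally show ?thesis .
qed

lemma PsL_eq_0_if_no_meas_boundary:
  fixes E \<Omega> :: "'a::euclidean_space set"
  assumes "E \<in> sets lebesgue" and "connected \<Omega>" and "meas_boundary E \<inter> \<Omega> = {}"
  shows "PsL s E \<Omega> = 0"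
proof -
  have cover: "\<Omega> \<subseteq> locally_null_points E \<union> locally_null_points (- E)"
    using assms Compl_meas_boundary_subset[OF assms(1)] by blast
  then have "locally_null_points E \<inter> \<Omega> = {} \<or> locally_null_points (- E) \<inter> \<Omega> = {}"
    using connectedD[OF assms(2) open_locally_null_points open_locally_null_points]
      locally_null_points_Compl_disjoint by blast
  then have "- E \<inter> \<Omega> \<subseteq> - E \<inter> locally_null_points (- E) \<or> E \<inter> \<Omega> \<subseteq> E \<inter> locally_null_points E"
    using cover by blast
  then have "- E \<inter> \<Omega> \<in> null_sets lebesgue \<or> E \<inter> \<Omega> \<in> null_sets lebesgue"
    using null_sets_Int_locally_null_points null_sets_lebesgue_subset by blast
  then show ?thesis
    unfolding PsL_def using Ls_null_left Ls_null_right by blast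
qed

theorem proposition3p2:
  fixes s :: real and E \<Omega> :: "'a::euclidean_space set"
  assumes "0 < s" and "s < 1"
    and "E \<in> sets lebesgue"
    and "locally_finite_sper s E"
    and "open \<Omega>"
  shows "(meas_boundary E \<inter> \<Omega> \<noteq> {} \<longrightarrow> PsL s E \<Omega> > 0)
    \<and> (connected \<Omega> \<longrightarrow> meas_boundary E \<inter> \<Omega> = {} \<longrightarrow> PsL s E \<Omega> = 0)
    \<and> (bounded \<Omega> \<and> connected \<Omega> \<longrightarrow> (PsL s E \<Omega> > 0 \<longleftrightarrow> meas_boundary E \<inter> \<Omega> \<noteq> {}))"
proof -
  have "- real DIM('a) \<le> s" using \<open>0 < s\<close> by simp
  then have "meas_boundary E \<inter> \<Omega> \<noteq> {} \<Longrightarrow> PsL s E \<Omega> > 0"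
    using assms by (intro PsL_pos_if_meas_boundary)
  moreover have "connected \<Omega> \<Longrightarrow> meas_boundary E \<inter> \<Omega> = {} \<Longrightarrow> PsL s E \<Omega> = 0"
    using assms by (intro PsL_eq_0_if_no_meas_boundary)
  ultimately show ?thesis by auto
qed

end
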